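(* Let $R$ be a finite chain ring, $r\ge1$, and let $A=\bigcup_{i=1}^lA_i\subseteq R$ be a well-conditioned set partitioned into $l$ blocks with $|A_i|=r+1$, so $n=|A|=(r+1)l$. Assume there is $g\in\mathcal F_A$ of degree $r+1$ such that $1,g,\dots,g^{l-1}$ span $\mathcal F_A$ as an $R$-module. Let $\mathcal F_A^r=\bigoplus_{i=0}^{r-1}\mathcal F_A\,x^i$, let $K=rt$ with $1\le t\le l$, and let $\Phi:R^K\to\mathcal F_A^r$, $a\mapsto f_a$, be an injective $R$-linear map. Let $\mathcal C=\{(f_a(\alpha))_{\alpha\in A}: a\in R^K\}$. Then $\mathcal C$ is a free $R$-linear code of length $n$ and rank $K$, each coordinate $\alpha\in A_j$ can be recovered from the coordinates in $A_j\setminus\{\alpha\}$ (so $\mathcal C$ has locality $r$), and its minimum distance satisfies $$d\ \ge\ n-\max_{a\in R^K\setminus\{0\}}\deg f_a .$$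
   Context: A finite chain ring is a finite commutative local ring whose ideals are totally ordered by inclusion; $N(R)$ is its unit group. A subset $T\subseteq N(R)$ is subtractive if $a-b\in N(R)$ for all distinct $a,b\in T$. A set $\{a_1,\dots,a_n\}\subseteq R$ is well-conditioned if either it is a subtractive subset of $N(R)$, or for some $i$ the set without $a_i$ is a subtractive subset of $N(R)$ and $a_i$ is a zero divisor (or $0$). For a partition $A=\bigcup_i A_i$, $\mathcal F_A=\{f\in R[x]:\deg f<|A|,\ f$ constant on each $A_i\}$. *)

theory Defs
  imports "HOL-Computational_Algebra.Polynomial"
begin

definition is_ideal :: "'a::comm_ring_1 set \<Rightarrow> bool" where
  "is_ideal I \<longleftrightarrow> 0 \<in> I \<and> (\<forall>x\<in>I. \<forall>y\<in>I. x + y \<in> I) \<and> (\<forall>r. \<forall>x\<in>I. r * x \<in> I)"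

definition units_of_ring :: "'a::comm_ring_1 set" where
  "units_of_ring = {a. a dvd 1}"

definition local_ring :: "'a::comm_ring_1 itself \<Rightarrow> bool" where
  "local_ring _ \<longleftrightarrow> (0::'a) \<noteq> 1 \<and> is_ideal (- (units_of_ring :: 'a set))"

definition finite_chain_ring :: "'a::comm_ring_1 itself \<Rightarrow> bool" where
  "finite_chain_ring T \<longleftrightarrow> finite (UNIV :: 'a set) \<and> local_ring T \<and>
     (\<forall>I J :: 'a set. is_ideal I \<and> is_ideal J \<longrightarrow> I \<subseteq> J \<or> J \<subseteq> I)"

definition subtractive :: "'a::comm_ring_1 set \<Rightarrow> bool" where
  "subtractive T \<longleftrightarrow> T \<subseteq> units_of_ring \<and>
     (\<forall>a\<in>T. \<forall>b\<in>T. a \<noteq> b \<longrightarrow> a - b \<in> units_of_ring)"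

text \<open>Zero divisor (including 0): annihilated by some nonzero element.\<close>
definition zero_divisor :: "'a::comm_ring_1 \<Rightarrow> bool" where
  "zero_divisor a \<longleftrightarrow> (\<exists>b. b \<noteq> 0 \<and> a * b = 0)"

definition well_conditioned :: "'a::comm_ring_1 set \<Rightarrow> bool" where
  "well_conditioned S \<longleftrightarrow> subtractive S \<or>
     (\<exists>a\<in>S. subtractive (S - {a}) \<and> (zero_divisor a \<or> a = 0))"

definition F_A :: "'a::comm_ring_1 set \<Rightarrow> (nat \<Rightarrow> 'a set) \<Rightarrow> nat \<Rightarrow> 'a poly set" where
  "F_A A Ablk l = {f. degree f < card A \<and>
      (\<forall>i<l. \<forall>x\<in>Ablk i. \<forall>y\<in>Ablk i. poly f x = poly f y)}"

definition F_A_r :: "'a::comm_ring_1 set \<Rightarrow> (nat \<Rightarrow> 'a set) \<Rightarrow> nat \<Rightarrow> nat \<Rightarrow> 'a poly set" where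
  "F_A_r A Ablk l r = {(\<Sum>i<r. h i * monom 1 i) | h. \<forall>i<r. h i \<in> F_A A Ablk l}"

text \<open>R^K, modelled as functions nat => R supported in {..<K}.\<close>
definition vecs :: "nat \<Rightarrow> (nat \<Rightarrow> 'a::zero) set" where
  "vecs K = {a. \<forall>i\<ge>K. a i = 0}"

text \<open>Codewords are functions on A (0 outside A).\<close>
definition eval_code :: "'a::comm_ring_1 set \<Rightarrow> nat \<Rightarrow> ((nat \<Rightarrow> 'a) \<Rightarrow> 'a poly) \<Rightarrow> ('a \<Rightarrow> 'a) set" where
  "eval_code A K \<Phi> = {(\<lambda>\<alpha>. if \<alpha> \<in> A then poly (\<Phi> a) \<alpha> else 0) | a. a \<in> vecs K}"

definition free_code_of_rank :: "'a::comm_ring_1 set \<Rightarrow> ('a \<Rightarrow> 'a) set \<Rightarrow> nat \<Rightarrow> bool" where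
  "free_code_of_rank A C K \<longleftrightarrow> C \<subseteq> {c. \<forall>\<alpha>. \<alpha> \<notin> A \<longrightarrow> c \<alpha> = 0} \<and>
     (\<exists>b :: nat \<Rightarrow> ('a \<Rightarrow> 'a).
        C = {(\<lambda>\<alpha>. \<Sum>i<K. u i * b i \<alpha>) | u. True} \<and>
        (\<forall>u. (\<lambda>\<alpha>. \<Sum>i<K. u i * b i \<alpha>) = (\<lambda>_. 0) \<longrightarrow> (\<forall>i<K. u i = 0)))"

definition hamming_weight :: "'a set \<Rightarrow> ('a \<Rightarrow> 'b::zero) \<Rightarrow> nat" where
  "hamming_weight A c = card {\<alpha>\<in>A. c \<alpha> \<noteq> 0}"

definition min_distance :: "'a set \<Rightarrow> ('a \<Rightarrow> 'b::zero) set \<Rightarrow> nat" where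
  "min_distance A C = Min {hamming_weight A c | c. c \<in> C \<and> c \<noteq> (\<lambda>_. 0)}"

end

theory Submission
  imports Defs
begin

text \<open>Everything rests on a root bound over a commutative ring: a nonzero polynomial has at most
  \<open>deg f\<close> roots in a set whose pairwise differences are units (split off one linear factor per
  root; as the differences are units, the cofactor still vanishes at the other roots). In a local
  ring a well-conditioned set has this property, because a unit minus a non-unit is a unit.
  Since \<open>deg g = r + 1\<close>, every \<open>f\<^sub>a\<close> has degree at most \<open>(r+1)(l-1) + r - 1 < |A|\<close>, so
  evaluation on \<open>A\<close> is injective; this yields freeness and the weight bound \<open>n - deg f\<^sub>a\<close>.
  On a block \<open>A\<^sub>j\<close> the coefficients of \<open>f\<^sub>a\<close> with respect to \<open>1, x, \<dots>, x\<^bsup>r-1\<^esup>\<close> are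
  constant, so \<open>f\<^sub>a\<close> agrees there with a polynomial of degree \<open>< r\<close>, which is determined by its
  values at the other \<open>r\<close> points of the block.\<close>

definition unit_differences :: "'a::comm_ring_1 set \<Rightarrow> bool" where
  "unit_differences S \<longleftrightarrow> (\<forall>a\<in>S. \<forall>b\<in>S. a \<noteq> b \<longrightarrow> (a - b) dvd 1)"

lemma unit_differences_subset: "unit_differences S \<Longrightarrow> T \<subseteq> S \<Longrightarrow> unit_differences T"
  unfolding unit_differences_def by blast

lemma unit_mult_eq_0D:
  fixes u :: "'a::comm_ring_1"
  assumes "u dvd 1" and "u * x = 0"
  shows "x = 0"
proof -
  from \<open>u dvd 1\<close> obtain k where "1 = u * k" by (auto elim: dvdE)
  then have "x = k * (u * x)" by (metis mult.assoc mult.commute mult_1)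
  with \<open>u * x = 0\<close> show ?thesis by simp
qed

lemma zero_divisor_not_unit: "zero_divisor (a::'a::comm_ring_1) \<Longrightarrow> \<not> a dvd 1"
  unfolding zero_divisor_def using unit_mult_eq_0D by blast

lemma local_ring_unit_diff_nonunit:
  fixes u z :: "'a::comm_ring_1"
  assumes "local_ring TYPE('a)" and "u dvd 1" and "\<not> z dvd 1"
  shows "(u - z) dvd 1"
proof (rule ccontr)
  assume "\<not> (u - z) dvd 1"
  moreover have "is_ideal (- units_of_ring :: 'a set)"
    using assms(1) unfolding local_ring_def by blast
  ultimately have "(u - z) + z \<in> - units_of_ring"
    using \<open>\<not> z dvd 1\<close> unfolding is_ideal_def units_of_ring_def by blast
  with \<open>u dvd 1\<close> show False unfolding units_of_ring_def by simp
qed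

lemma well_conditioned_unit_differences:
  fixes A :: "'a::comm_ring_1 set"
  assumes loc: "local_ring TYPE('a)" and wc: "well_conditioned A"
  shows "unit_differences A"
  using wc unfolding well_conditioned_def
proof
  assume "subtractive A"
  then show ?thesis unfolding subtractive_def unit_differences_def units_of_ring_def by auto
next
  assume "\<exists>a\<in>A. subtractive (A - {a}) \<and> (zero_divisor a \<or> a = 0)"
  then obtain a0 where sub: "subtractive (A - {a0})" and "zero_divisor a0 \<or> a0 = 0" by blast
  moreover have "(0::'a) \<noteq> 1" using loc unfolding local_ring_def by blast
  ultimately have a0: "\<not> a0 dvd 1" using zero_divisor_not_unit by auto
  have units: "x dvd 1" if "x \<in> A - {a0}" for x
    using sub that unfolding subtractive_def units_of_ring_def by blast
  show ?thesis unfolding unit_differences_def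
  proof (intro ballI impI)
    fix x y assume "x \<in> A" "y \<in> A" "x \<noteq> y"
    then consider "x = a0" "y \<in> A - {a0}" | "y = a0" "x \<in> A - {a0}" | "x \<in> A - {a0}" "y \<in> A - {a0}"
      by blast
    then show "(x - y) dvd 1"
    proof cases
      case 1
      then have "(y - x) dvd 1" using local_ring_unit_diff_nonunit[OF loc units a0] by simp
      then show ?thesis by (metis minus_diff_eq minus_dvd_iff)
    next
      case 2
      then show ?thesis using local_ring_unit_diff_nonunit[OF loc units a0] by simp
    next
      case 3
      then show ?thesis using sub \<open>x \<noteq> y\<close> unfolding subtractive_def units_of_ring_def by blast
    qed
  qed
qed

lemma degree_linear_factor_mult:
  fixes q :: "'a::comm_ring_1 poly"
  assumes "q \<noteq> 0"
  shows "degree ([:-a, 1:] * q) = degree q + 1"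
proof -
  have "(1::'a) \<noteq> 0"
  proof
    assume "(1::'a) = 0"
    then have "coeff q n = 0" for n by (metis mult_1_right mult_zero_right)
    with assms show False by (simp add: poly_eq_iff)
  qed
  moreover have "coeff ([:-a, 1:] * q) (degree [:-a, 1:] + degree q) = lead_coeff [:-a, 1:] * lead_coeff q"
    by (rule coeff_mult_degree_sum)
  ultimately have "coeff ([:-a, 1:] * q) (degree q + 1) \<noteq> 0"
    using assms by simp
  then have "degree q + 1 \<le> degree ([:-a, 1:] * q)" by (rule le_degree)
  moreover have "degree ([:-a, 1:] * q) \<le> degree q + 1"
    using degree_mult_le[of "[:-a, 1:]" q] by simp
  ultimately show ?thesis by simp
qed

lemma card_roots_le_degree:
  fixes f :: "'a::comm_ring_1 poly"
  assumes "finite S" and "unit_differences S" and "f \<noteq> 0" and "\<forall>x\<in>S. poly f x = 0"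
  shows "card S \<le> degree f"
  using assms
proof (induction S arbitrary: f rule: finite_induct)
  case empty
  then show ?case by simp
next
  case (insert a S)
  have "poly f a = 0" using insert.prems(3) by simp
  then obtain q where f: "f = [:-a, 1:] * q" unfolding poly_eq_0_iff_dvd by (rule dvdE)
  have "q \<noteq> 0" using insert.prems(2) f by auto
  have "poly q x = 0" if "x \<in> S" for x
  proof (rule unit_mult_eq_0D)
    have "x \<noteq> a" using insert.hyps(2) that by blast
    then show "(x - a) dvd 1" using insert.prems(1) that unfolding unit_differences_def by simp
    have "poly f x = 0" using insert.prems(3) that by simp
    then show "(x - a) * poly q x = 0" unfolding f poly_mult by simp
  qed
  moreover have "unit_differences S" using insert.prems(1) by (rule unit_differences_subset) auto
  ultimately have "card S \<le> degree q" using insert.IH \<open>q \<noteq> 0\<close> by blast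
  then show ?case using insert.hyps f degree_linear_factor_mult[OF \<open>q \<noteq> 0\<close>] by simp
qed

corollary poly_eq_0_if_roots:
  fixes f :: "'a::comm_ring_1 poly"
  assumes "finite S" and "unit_differences S" and "degree f < card S" and "\<forall>x\<in>S. poly f x = 0"
  shows "f = 0"
  using card_roots_le_degree[OF assms(1,2) _ assms(4)] assms(3) by (meson leD)

lemma card_nonroots_ge:
  fixes f :: "'a::comm_ring_1 poly"
  assumes "finite A" and "unit_differences A" and "f \<noteq> 0"
  shows "card A - degree f \<le> card {\<alpha>\<in>A. poly f \<alpha> \<noteq> 0}"
proof -
  define Z where "Z = {\<alpha>\<in>A. poly f \<alpha> = 0}"
  have "Z \<subseteq> A" unfolding Z_def by auto
  have "finite Z" using \<open>Z \<subseteq> A\<close> assms(1) by (rule finite_subset)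
  moreover have "unit_differences Z" using assms(2) \<open>Z \<subseteq> A\<close> by (rule unit_differences_subset)
  ultimately have "card Z \<le> degree f" using assms(3) by (rule card_roots_le_degree) (simp add: Z_def)
  moreover have "{\<alpha>\<in>A. poly f \<alpha> \<noteq> 0} = A - Z" unfolding Z_def by auto
  ultimately show ?thesis using card_Diff_subset[OF \<open>finite Z\<close> \<open>Z \<subseteq> A\<close>] by simp
qed

lemma degree_sum_smult_power_le: "degree (\<Sum>i<l. smult (c i) (g ^ i)) \<le> degree g * (l - 1)"
proof (rule degree_sum_le)
  fix i assume "i \<in> {..<l}"
  then have "degree g * i \<le> degree g * (l - 1)" by (intro mult_le_mono2) auto
  then show "degree (smult (c i) (g ^ i)) \<le> degree g * (l - 1)"
    using degree_smult_le[of "c i" "g ^ i"] degree_power_le[of g i] by linarith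
qed simp

lemma degree_F_A_r_le:
  assumes "f \<in> F_A_r A Ablk l r" and "\<And>h. h \<in> F_A A Ablk l \<Longrightarrow> degree h \<le> D"
  shows "degree f \<le> D + (r - 1)"
proof -
  obtain h where f: "f = (\<Sum>i<r. h i * monom 1 i)" and h: "\<forall>i<r. h i \<in> F_A A Ablk l"
    using assms(1) unfolding F_A_r_def by blast
  show ?thesis unfolding f
  proof (rule degree_sum_le)
    fix i assume "i \<in> {..<r}"
    then have "degree (h i) \<le> D" "degree (monom (1::'a) i) \<le> r - 1"
      using assms(2) h by (auto intro: order.trans[OF degree_monom_le])
    then show "degree (h i * monom 1 i) \<le> D + (r - 1)"
      using degree_mult_le[of "h i" "monom 1 i"] by linarith
  qed simp
qed

lemma degree_F_A_r_less:
  assumes "f \<in> F_A_r A Ablk l r" and "F_A A Ablk l = {(\<Sum>i<l. smult (c i) (g ^ i)) | c. True}"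
    and "degree g = r + 1" and "0 < l"
  shows "degree f < (r + 1) * l"
proof -
  have "degree h \<le> (r + 1) * (l - 1)" if "h \<in> F_A A Ablk l" for h
  proof -
    from that obtain c where "h = (\<Sum>i<l. smult (c i) (g ^ i))" unfolding assms(2) by blast
    then show ?thesis using degree_sum_smult_power_le[where c = c and l = l and g = g] assms(3) by simp
  qed
  with assms(1) have "degree f \<le> (r + 1) * (l - 1) + (r - 1)" by (rule degree_F_A_r_le)
  also have "\<dots> < (r + 1) * l" using \<open>0 < l\<close> by (cases l) auto
  finally show ?thesis .
qed

lemma F_A_r_block_interpolant:
  assumes "f \<in> F_A_r A Ablk l r" and "j < l" and "\<alpha> \<in> Ablk j" and "0 < r"
  obtains p where "degree p < r" and "\<forall>\<beta>\<in>Ablk j. poly f \<beta> = poly p \<beta>"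
proof -
  obtain h where f: "f = (\<Sum>i<r. h i * monom 1 i)" and h: "\<forall>i<r. h i \<in> F_A A Ablk l"
    using assms(1) unfolding F_A_r_def by blast
  define p where "p = (\<Sum>i<r. monom (poly (h i) \<alpha>) i)"
  have "degree p \<le> r - 1" unfolding p_def
    by (rule degree_sum_le) (auto intro: order.trans[OF degree_monom_le])
  then have "degree p < r" using \<open>0 < r\<close> by linarith
  moreover have "poly f \<beta> = poly p \<beta>" if "\<beta> \<in> Ablk j" for \<beta>
  proof -
    have "\<forall>i<r. poly (h i) \<beta> = poly (h i) \<alpha>"
      using h assms(2,3) that unfolding F_A_def by blast
    then show ?thesis unfolding f p_def by (simp add: poly_sum poly_monom)
  qed
  ultimately show ?thesis using that by blast
qed

lemma poly_eq_at_point_if_eq_on_rest: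
  fixes p p' :: "'a::comm_ring_1 poly"
  assumes "finite B" and "unit_differences B" and "card B = r + 1" and "\<alpha> \<in> B"
    and "degree p < r" and "degree p' < r" and "\<forall>\<beta>\<in>B - {\<alpha>}. poly p \<beta> = poly p' \<beta>"
  shows "poly p \<alpha> = poly p' \<alpha>"
proof -
  have "degree (p - p') < card (B - {\<alpha>})"
    using assms(1,3-6) degree_diff_le_max[of p p'] by simp
  then have "p - p' = 0"
    using assms by (intro poly_eq_0_if_roots[of "B - {\<alpha>}"]) (auto intro: unit_differences_subset)
  then show ?thesis by simp
qed

definition linear_on_vecs :: "nat \<Rightarrow> ((nat \<Rightarrow> 'a::comm_ring_1) \<Rightarrow> 'a poly) \<Rightarrow> bool" where
  "linear_on_vecs K \<Phi> \<longleftrightarrow>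
     (\<forall>a\<in>vecs K. \<forall>b\<in>vecs K. \<Phi> (\<lambda>i. a i + b i) = \<Phi> a + \<Phi> b) \<and>
     (\<forall>c. \<forall>a\<in>vecs K. \<Phi> (\<lambda>i. c * a i) = smult c (\<Phi> a))"

lemma zero_in_vecs [simp]: "(\<lambda>_. 0) \<in> vecs K"
  unfolding vecs_def by simp

lemma linear_on_vecs_zero:
  assumes "linear_on_vecs K \<Phi>"
  shows "\<Phi> (\<lambda>_. 0) = 0"
proof -
  have "\<forall>c. \<forall>a\<in>vecs K. \<Phi> (\<lambda>i. c * a i) = smult c (\<Phi> a)"
    using assms unfolding linear_on_vecs_def by blast
  from bspec[OF spec[OF this, of 0] zero_in_vecs] show ?thesis by simp
qed

lemma linear_on_vecs_truncate:
  assumes lin: "linear_on_vecs K \<Phi>" and "m \<le> K"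
  shows "\<Phi> (\<lambda>j. if j < m then u j else 0) = (\<Sum>i<m. smult (u i) (\<Phi> (\<lambda>j. if j = i then 1 else 0)))"
  using \<open>m \<le> K\<close>
proof (induction m)
  case 0
  then show ?case using linear_on_vecs_zero[OF lin] by simp
next
  case (Suc m)
  define v where "v = (\<lambda>j. if j < m then u j else 0)"
  define e where "e = (\<lambda>j. if j = m then 1 else (0::'a))"
  have "v \<in> vecs K" "e \<in> vecs K" "(\<lambda>j. u m * e j) \<in> vecs K"
    using Suc.prems unfolding v_def e_def vecs_def by auto
  moreover have "(\<lambda>j. if j < Suc m then u j else 0) = (\<lambda>j. v j + u m * e j)"
    unfolding v_def e_def by (auto simp: less_Suc_eq)
  ultimately have "\<Phi> (\<lambda>j. if j < Suc m then u j else 0) = \<Phi> v + smult (u m) (\<Phi> e)"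
    using lin unfolding linear_on_vecs_def by simp
  then show ?case using Suc unfolding v_def e_def by simp
qed

definition eval_word :: "'a set \<Rightarrow> 'a::comm_ring_1 poly \<Rightarrow> 'a \<Rightarrow> 'a" where
  "eval_word A f = (\<lambda>\<alpha>. if \<alpha> \<in> A then poly f \<alpha> else 0)"

lemma hamming_weight_eval_word: "hamming_weight A (eval_word A f) = card {\<alpha>\<in>A. poly f \<alpha> \<noteq> 0}"
  unfolding hamming_weight_def eval_word_def by (rule arg_cong[where f = card]) auto

lemma eval_code_eq: "eval_code A K \<Phi> = {eval_word A (\<Phi> a) | a. a \<in> vecs K}"
  unfolding eval_code_def eval_word_def by simp

lemma eval_code_locality:
  assumes into: "\<Phi> ` vecs K \<subseteq> F_A_r A Ablk l r" and "0 < r"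
    and "finite A" and "unit_differences A" and "A = (\<Union>i<l. Ablk i)"
    and "\<forall>i<l. card (Ablk i) = r + 1"
  shows "\<forall>j<l. \<forall>\<alpha>\<in>Ablk j. \<forall>c\<in>eval_code A K \<Phi>. \<forall>c'\<in>eval_code A K \<Phi>.
           (\<forall>\<beta>\<in>Ablk j - {\<alpha>}. c \<beta> = c' \<beta>) \<longrightarrow> c \<alpha> = c' \<alpha>"
proof (intro allI impI ballI)
  fix j \<alpha> c c'
  assume "j < l" and "\<alpha> \<in> Ablk j" and "c \<in> eval_code A K \<Phi>" and "c' \<in> eval_code A K \<Phi>"
    and agree: "\<forall>\<beta>\<in>Ablk j - {\<alpha>}. c \<beta> = c' \<beta>"
  have "Ablk j \<subseteq> A" using \<open>j < l\<close> assms(5) by blast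
  then have block: "finite (Ablk j)" "unit_differences (Ablk j)" "card (Ablk j) = r + 1"
    using assms(3,4,6) \<open>j < l\<close> by (auto intro: finite_subset unit_differences_subset)
  obtain a a' where "a \<in> vecs K" "a' \<in> vecs K" and c: "c = eval_word A (\<Phi> a)" "c' = eval_word A (\<Phi> a')"
    using \<open>c \<in> eval_code A K \<Phi>\<close> \<open>c' \<in> eval_code A K \<Phi>\<close> unfolding eval_code_eq by blast
  then have "\<Phi> a \<in> F_A_r A Ablk l r" "\<Phi> a' \<in> F_A_r A Ablk l r" using into by auto
  obtain p where "degree p < r" and p: "\<forall>\<beta>\<in>Ablk j. poly (\<Phi> a) \<beta> = poly p \<beta>"
    using F_A_r_block_interpolant[OF \<open>\<Phi> a \<in> F_A_r A Ablk l r\<close> \<open>j < l\<close> \<open>\<alpha> \<in> Ablk j\<close> \<open>0 < r\<close>] .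
  obtain p' where "degree p' < r" and p': "\<forall>\<beta>\<in>Ablk j. poly (\<Phi> a') \<beta> = poly p' \<beta>"
    using F_A_r_block_interpolant[OF \<open>\<Phi> a' \<in> F_A_r A Ablk l r\<close> \<open>j < l\<close> \<open>\<alpha> \<in> Ablk j\<close> \<open>0 < r\<close>] .
  have "\<forall>\<beta>\<in>Ablk j - {\<alpha>}. poly p \<beta> = poly p' \<beta>"
    using agree p p' \<open>Ablk j \<subseteq> A\<close> unfolding c eval_word_def by (metis Diff_iff subsetD)
  with block \<open>\<alpha> \<in> Ablk j\<close> \<open>degree p < r\<close> \<open>degree p' < r\<close> have "poly p \<alpha> = poly p' \<alpha>"
    by (rule poly_eq_at_point_if_eq_on_rest)
  then show "c \<alpha> = c' \<alpha>" using p p' \<open>\<alpha> \<in> Ablk j\<close> \<open>Ablk j \<subseteq> A\<close> unfolding c eval_word_def by auto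
qed

locale evaluation_code =
  fixes A :: "'a::comm_ring_1 set" and K :: nat and \<Phi> :: "(nat \<Rightarrow> 'a) \<Rightarrow> 'a poly"
  assumes finite_A: "finite A"
    and unit_differences_A: "unit_differences A"
    and linear: "linear_on_vecs K \<Phi>"
    and inj: "inj_on \<Phi> (vecs K)"
    and degree_less: "\<And>a. a \<in> vecs K \<Longrightarrow> degree (\<Phi> a) < card A"
begin

lemma \<Phi>_eq_0_iff:
  assumes "a \<in> vecs K"
  shows "\<Phi> a = 0 \<longleftrightarrow> a = (\<lambda>_. 0)"
  using inj_onD[OF inj _ assms zero_in_vecs] linear_on_vecs_zero[OF linear] by auto

lemma eval_word_eq_0_iff:
  assumes "a \<in> vecs K"
  shows "eval_word A (\<Phi> a) = (\<lambda>_. 0) \<longleftrightarrow> a = (\<lambda>_. 0)"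
proof
  assume "eval_word A (\<Phi> a) = (\<lambda>_. 0)"
  then have "\<Phi> a = 0"
    using degree_less[OF assms] finite_A unit_differences_A
    by (intro poly_eq_0_if_roots[of A]) (auto simp: eval_word_def fun_eq_iff split: if_splits)
  then show "a = (\<lambda>_. 0)" using \<Phi>_eq_0_iff[OF assms] by blast
next
  assume "a = (\<lambda>_. 0)"
  then show "eval_word A (\<Phi> a) = (\<lambda>_. 0)"
    using linear_on_vecs_zero[OF linear] unfolding eval_word_def by auto
qed

lemma free_code: "free_code_of_rank A (eval_code A K \<Phi>) K"
proof -
  define b where "b i = eval_word A (\<Phi> (\<lambda>j. if j = i then 1 else 0))" for i
  define trunc :: "(nat \<Rightarrow> 'a) \<Rightarrow> nat \<Rightarrow> 'a" where "trunc u j = (if j < K then u j else 0)" for u j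
  have trunc_vecs: "trunc u \<in> vecs K" for u unfolding trunc_def vecs_def by simp
  have combination: "(\<lambda>\<alpha>. \<Sum>i<K. u i * b i \<alpha>) = eval_word A (\<Phi> (trunc u))" for u
    unfolding trunc_def linear_on_vecs_truncate[OF linear order_refl] b_def eval_word_def
    by (simp add: poly_sum fun_eq_iff)
  have "eval_code A K \<Phi> = {(\<lambda>\<alpha>. \<Sum>i<K. u i * b i \<alpha>) | u. True}"
  proof -
    have "trunc a = a" if "a \<in> vecs K" for a using that unfolding trunc_def vecs_def by auto
    then show ?thesis unfolding eval_code_eq combination using trunc_vecs by metis
  qed
  moreover have "\<forall>i<K. u i = 0" if "(\<lambda>\<alpha>. \<Sum>i<K. u i * b i \<alpha>) = (\<lambda>_. 0)" for u
  proof -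
    have "trunc u = (\<lambda>_. 0)" using that eval_word_eq_0_iff trunc_vecs combination by metis
    then show ?thesis unfolding trunc_def by (metis (full_types))
  qed
  moreover have "eval_code A K \<Phi> \<subseteq> {c. \<forall>\<alpha>. \<alpha> \<notin> A \<longrightarrow> c \<alpha> = 0}"
    unfolding eval_code_eq eval_word_def by auto
  ultimately show ?thesis unfolding free_code_of_rank_def by blast
qed

lemma min_distance_ge:
  assumes "0 < K" and "(0::'a) \<noteq> 1"
  shows "int (min_distance A (eval_code A K \<Phi>))
           \<ge> int (card A) - int (Max {degree (\<Phi> a) | a. a \<in> vecs K \<and> a \<noteq> (\<lambda>_. 0)})"
proof -
  define W where "W = {hamming_weight A c | c. c \<in> eval_code A K \<Phi> \<and> c \<noteq> (\<lambda>_. 0)}"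
  define D where "D = {degree (\<Phi> a) | a. a \<in> vecs K \<and> a \<noteq> (\<lambda>_. 0)}"
  have "hamming_weight A c \<le> card A" for c :: "'a \<Rightarrow> 'a"
    unfolding hamming_weight_def using finite_A by (rule card_mono) auto
  then have "W \<subseteq> {..card A}" unfolding W_def by blast
  then have "finite W" by (rule finite_subset) simp
  have "finite D" by (rule finite_subset[of _ "{..<card A}"]) (auto simp: D_def degree_less)
  define e :: "nat \<Rightarrow> 'a" where "e j = (if j = 0 then 1 else 0)" for j
  have "e \<in> vecs K" "e \<noteq> (\<lambda>_. 0)"
    using assms unfolding e_def vecs_def by (auto simp: fun_eq_iff)
  then have "W \<noteq> {}" unfolding W_def eval_code_eq using eval_word_eq_0_iff by blast
  then obtain c where "c \<in> eval_code A K \<Phi>" "c \<noteq> (\<lambda>_. 0)" and "Min W = hamming_weight A c"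
    using Min_in[OF \<open>finite W\<close>] unfolding W_def by auto
  then obtain a where a: "a \<in> vecs K" "a \<noteq> (\<lambda>_. 0)" and "Min W = hamming_weight A (eval_word A (\<Phi> a))"
    unfolding eval_code_eq using eval_word_eq_0_iff by auto
  moreover have "\<Phi> a \<noteq> 0" using a \<Phi>_eq_0_iff by blast
  then have "card A - degree (\<Phi> a) \<le> card {\<alpha>\<in>A. poly (\<Phi> a) \<alpha> \<noteq> 0}"
    using card_nonroots_ge finite_A unit_differences_A by blast
  moreover have "degree (\<Phi> a) \<le> Max D" using \<open>finite D\<close> a unfolding D_def by (auto intro!: Max_ge)
  ultimately show ?thesis
    unfolding min_distance_def W_def[symmetric] D_def[symmetric] hamming_weight_eval_word by linarith
qed

end

theorem mainTheorem11:
  fixes A :: "'a::comm_ring_1 set" and Ablk :: "nat \<Rightarrow> 'a set"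
    and l r t K :: nat and g :: "'a poly" and \<Phi> :: "(nat \<Rightarrow> 'a) \<Rightarrow> 'a poly"
  assumes chain: "finite_chain_ring TYPE('a)"
    and r: "r \<ge> 1"
    and wc: "well_conditioned A"
    and partA: "A = (\<Union>i<l. Ablk i)"
    and disj: "\<forall>i<l. \<forall>j<l. i \<noteq> j \<longrightarrow> Ablk i \<inter> Ablk j = {}"
    and blk: "\<forall>i<l. card (Ablk i) = r + 1"
    and gF: "g \<in> F_A A Ablk l" and gdeg: "degree g = r + 1"
    and gspan: "F_A A Ablk l = {(\<Sum>i<l. smult (c i) (g ^ i)) | c. True}"
    and t: "1 \<le> t" "t \<le> l" and K: "K = r * t"
    and \<Phi>_into: "\<Phi> ` vecs K \<subseteq> F_A_r A Ablk l r"
    and \<Phi>_inj: "inj_on \<Phi> (vecs K)"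
    and \<Phi>_add: "\<forall>a\<in>vecs K. \<forall>b\<in>vecs K. \<Phi> (\<lambda>i. a i + b i) = \<Phi> a + \<Phi> b"
    and \<Phi>_smult: "\<forall>c. \<forall>a\<in>vecs K. \<Phi> (\<lambda>i. c * a i) = smult c (\<Phi> a)"
  shows "card A = (r + 1) * l
    \<and> free_code_of_rank A (eval_code A K \<Phi>) K
    \<and> (\<forall>j<l. \<forall>\<alpha>\<in>Ablk j. \<forall>c\<in>eval_code A K \<Phi>. \<forall>c'\<in>eval_code A K \<Phi>.
          (\<forall>\<beta>\<in>Ablk j - {\<alpha>}. c \<beta> = c' \<beta>) \<longrightarrow> c \<alpha> = c' \<alpha>)
    \<and> int (min_distance A (eval_code A K \<Phi>))
        \<ge> int (card A) - int (Max {degree (\<Phi> a) | a. a \<in> vecs K \<and> a \<noteq> (\<lambda>_. 0)})"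
proof -
  have "local_ring TYPE('a)" and "finite A"
    using chain unfolding finite_chain_ring_def by (auto intro: finite_subset)
  then have nz: "(0::'a) \<noteq> 1" and ud: "unit_differences A"
    using wc well_conditioned_unit_differences unfolding local_ring_def by auto
  have cardA: "card A = (r + 1) * l"
  proof -
    have "finite (Ablk i)" if "i < l" for i
      using partA that \<open>finite A\<close> by (auto intro: finite_subset)
    then show ?thesis using blk disj unfolding partA by (subst card_UN_disjoint) auto
  qed
  have "degree (\<Phi> a) < card A" if "a \<in> vecs K" for a
    using degree_F_A_r_less[OF _ gspan gdeg] \<Phi>_into that t cardA by auto
  then interpret evaluation_code A K \<Phi>
    using \<open>finite A\<close> ud \<Phi>_inj \<Phi>_add \<Phi>_smult by unfold_locales (auto simp: linear_on_vecs_def)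
  have "0 < K" and "0 < r" using K r t by simp_all
  then show ?thesis
    using cardA free_code min_distance_ge[OF _ nz] eval_code_locality[OF \<Phi>_into _ \<open>finite A\<close> ud partA blk]
    by blast
qed

end
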